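(* Let $\Omega$ be a metric space, $\mathcal{FV}(\Omega)$ a dom-space and $T\colon\mathcal{FV}(\Omega)\to\mathcal{CC}(\Omega)$ continuous and linear. Then the map $\delta\circ T\colon\Omega\to\mathcal{FV}(\Omega)'_\gamma$, $x\mapsto\delta_x\circ T$, is well-defined and Cauchy continuous.
   Context: $\mathbb{K}\in\{\mathbb{R},\mathbb{C}\}$. A map between metric/uniform spaces is Cauchy continuous if it maps Cauchy sequences to Cauchy sequences; $\mathcal{CC}(\Omega)$ is the space of Cauchy continuous $\mathbb{K}$-valued functions on $\Omega$ with the topology of uniform convergence on precompact subsets of $\Omega$. $\mathcal{FV}(\Omega)'_\gamma$: dual with the topology of uniform convergence on precompact subsets. $(\delta_x\circ T)(f):=T(f)(x)$. Framework: $J,M$ non-empty index sets, $(\omega_m)_{m\in M}$ non-empty sets, $\nu_{j,m}\colon\omega_m\to[0,\infty)$ such that for all $m$, $x\in\omega_m$ some $\nu_{j,m}(x)>0$; $\operatorname{AP}(\Omega)\subset\mathbb{K}^\Omega$ a linear subspace; $T_m\colon\operatorname{dom}T_m\to\mathbb{K}^{\omega_m}$ linear maps on linear subspaces of $\mathbb{K}^\Omega$; $\mathcal{FV}(\Omega):=\{f\in\operatorname{AP}(\Omega)\cap\bigcap_m\operatorname{dom}T_m: |f|_{j,m}:=\sup_{x\in\omega_m}|T_m(f)(x)|\nu_{j,m}(x)<\infty\ \forall j,m\}$ with these seminorms. It is a dom-space if it is Hausdorff, the seminorms are directed and every $\delta_x\colon f\mapsto f(x)$ belongs to $\mathcal{FV}(\Omega)'$.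 *)

theory Defs
  imports "HOL-Analysis.Analysis" "HOL-Library.Function_Algebras"
begin

(* Scalar field K: a type of class real_normed_field (by Mazur's theorem this is R or C
   up to isomorphism).  Omega is the whole of a type 'a :: metric_space, so K^Omega is
   'a => 'k.  The index sets J and M are the types 'j and 'm (non-empty by construction);
   all omega_m live in a common type 'w. *)

definition K_subspace :: "('a \<Rightarrow> 'k::real_normed_field) set \<Rightarrow> bool" where
  "K_subspace S \<longleftrightarrow> (\<lambda>x. 0) \<in> S \<and> (\<forall>f\<in>S. \<forall>g\<in>S. f + g \<in> S)
      \<and> (\<forall>c::'k. \<forall>f\<in>S. (\<lambda>x. c * f x) \<in> S)"

definition K_linear_on :: "('a \<Rightarrow> 'k::real_normed_field) set \<Rightarrow> (('a \<Rightarrow> 'k) \<Rightarrow> 'b \<Rightarrow> 'k) \<Rightarrow> bool" where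
  "K_linear_on S T \<longleftrightarrow> (\<forall>f\<in>S. \<forall>g\<in>S. T (f + g) = T f + T g)
      \<and> (\<forall>c::'k. \<forall>f\<in>S. T (\<lambda>x. c * f x) = (\<lambda>y. c * T f y))"

definition K_linear_functional_on :: "('a \<Rightarrow> 'k::real_normed_field) set \<Rightarrow> (('a \<Rightarrow> 'k) \<Rightarrow> 'k) \<Rightarrow> bool" where
  "K_linear_functional_on S \<phi> \<longleftrightarrow> (\<forall>f\<in>S. \<forall>g\<in>S. \<phi> (f + g) = \<phi> f + \<phi> g)
      \<and> (\<forall>c::'k. \<forall>f\<in>S. \<phi> (\<lambda>x. c * f x) = c * \<phi> f)"

definition framework ::
  "('a \<Rightarrow> 'k::real_normed_field) set \<Rightarrow> ('m \<Rightarrow> ('a \<Rightarrow> 'k) set) \<Rightarrow> ('m \<Rightarrow> ('a \<Rightarrow> 'k) \<Rightarrow> 'w \<Rightarrow> 'k)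
   \<Rightarrow> ('j \<Rightarrow> 'm \<Rightarrow> 'w \<Rightarrow> real) \<Rightarrow> ('m \<Rightarrow> 'w set) \<Rightarrow> bool" where
  "framework AP domT Tm \<nu> \<omega> \<longleftrightarrow>
     (\<forall>m. \<omega> m \<noteq> {}) \<and> (\<forall>j m x. \<nu> j m x \<ge> 0) \<and> (\<forall>m. \<forall>x\<in>\<omega> m. \<exists>j. \<nu> j m x > 0)
     \<and> K_subspace AP \<and> (\<forall>m. K_subspace (domT m)) \<and> (\<forall>m. K_linear_on (domT m) (Tm m))"

definition FVsemi ::
  "('m \<Rightarrow> ('a \<Rightarrow> 'k::real_normed_field) \<Rightarrow> 'w \<Rightarrow> 'k) \<Rightarrow> ('j \<Rightarrow> 'm \<Rightarrow> 'w \<Rightarrow> real) \<Rightarrow> ('m \<Rightarrow> 'w set)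
   \<Rightarrow> 'j \<Rightarrow> 'm \<Rightarrow> ('a \<Rightarrow> 'k) \<Rightarrow> real" where
  "FVsemi Tm \<nu> \<omega> j m f = (SUP x\<in>\<omega> m. norm (Tm m f x) * \<nu> j m x)"

definition FV ::
  "('a \<Rightarrow> 'k::real_normed_field) set \<Rightarrow> ('m \<Rightarrow> ('a \<Rightarrow> 'k) set) \<Rightarrow> ('m \<Rightarrow> ('a \<Rightarrow> 'k) \<Rightarrow> 'w \<Rightarrow> 'k)
   \<Rightarrow> ('j \<Rightarrow> 'm \<Rightarrow> 'w \<Rightarrow> real) \<Rightarrow> ('m \<Rightarrow> 'w set) \<Rightarrow> ('a \<Rightarrow> 'k) set" where
  "FV AP domT Tm \<nu> \<omega> = {f. f \<in> AP \<and> (\<forall>m. f \<in> domT m)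
      \<and> (\<forall>j m. bdd_above ((\<lambda>x. norm (Tm m f x) * \<nu> j m x) ` \<omega> m))}"

text \<open>Continuity of a linear functional on FV (locally convex topology generated by
  the seminorms): bounded by a constant times finitely many seminorms.\<close>
definition FV_dual_elem ::
  "('a \<Rightarrow> 'k::real_normed_field) set \<Rightarrow> ('m \<Rightarrow> ('a \<Rightarrow> 'k) set) \<Rightarrow> ('m \<Rightarrow> ('a \<Rightarrow> 'k) \<Rightarrow> 'w \<Rightarrow> 'k)
   \<Rightarrow> ('j \<Rightarrow> 'm \<Rightarrow> 'w \<Rightarrow> real) \<Rightarrow> ('m \<Rightarrow> 'w set) \<Rightarrow> (('a \<Rightarrow> 'k) \<Rightarrow> 'k) \<Rightarrow> bool" where
  "FV_dual_elem AP domT Tm \<nu> \<omega> \<phi> \<longleftrightarrow>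
     K_linear_functional_on (FV AP domT Tm \<nu> \<omega>) \<phi> \<and>
     (\<exists>S C. finite S \<and> (\<forall>f\<in>FV AP domT Tm \<nu> \<omega>.
        norm (\<phi> f) \<le> C * (\<Sum>(j,m)\<in>S. FVsemi Tm \<nu> \<omega> j m f)))"

definition dom_space ::
  "('a \<Rightarrow> 'k::real_normed_field) set \<Rightarrow> ('m \<Rightarrow> ('a \<Rightarrow> 'k) set) \<Rightarrow> ('m \<Rightarrow> ('a \<Rightarrow> 'k) \<Rightarrow> 'w \<Rightarrow> 'k)
   \<Rightarrow> ('j \<Rightarrow> 'm \<Rightarrow> 'w \<Rightarrow> real) \<Rightarrow> ('m \<Rightarrow> 'w set) \<Rightarrow> bool" where
  "dom_space AP domT Tm \<nu> \<omega> \<longleftrightarrow>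
     framework AP domT Tm \<nu> \<omega>
     \<and> (\<forall>f\<in>FV AP domT Tm \<nu> \<omega>. f \<noteq> (\<lambda>x. 0) \<longrightarrow> (\<exists>j m. FVsemi Tm \<nu> \<omega> j m f > 0))
     \<and> (\<forall>j1 m1 j2 m2. \<exists>j3 m3 C. C > 0 \<and> (\<forall>f\<in>FV AP domT Tm \<nu> \<omega>.
           FVsemi Tm \<nu> \<omega> j1 m1 f \<le> C * FVsemi Tm \<nu> \<omega> j3 m3 f \<and>
           FVsemi Tm \<nu> \<omega> j2 m2 f \<le> C * FVsemi Tm \<nu> \<omega> j3 m3 f))
     \<and> (\<forall>x. FV_dual_elem AP domT Tm \<nu> \<omega> (\<lambda>f. f x))"

definition CC :: "('a::metric_space \<Rightarrow> 'k::real_normed_field) set" where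
  "CC = {f. \<forall>X. Cauchy X \<longrightarrow> Cauchy (\<lambda>n. f (X n))}"

text \<open>T : FV -> CC continuous and linear, CC carrying the topology of uniform
  convergence on precompact (= totally bounded) subsets of Omega.\<close>
definition FV_to_CC_cont_linear ::
  "('a::metric_space \<Rightarrow> 'k::real_normed_field) set \<Rightarrow> ('m \<Rightarrow> ('a \<Rightarrow> 'k) set) \<Rightarrow> ('m \<Rightarrow> ('a \<Rightarrow> 'k) \<Rightarrow> 'w \<Rightarrow> 'k)
   \<Rightarrow> ('j \<Rightarrow> 'm \<Rightarrow> 'w \<Rightarrow> real) \<Rightarrow> ('m \<Rightarrow> 'w set) \<Rightarrow> (('a \<Rightarrow> 'k) \<Rightarrow> 'a \<Rightarrow> 'k) \<Rightarrow> bool" where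
  "FV_to_CC_cont_linear AP domT Tm \<nu> \<omega> T \<longleftrightarrow>
     (\<forall>f\<in>FV AP domT Tm \<nu> \<omega>. T f \<in> CC)
     \<and> K_linear_on (FV AP domT Tm \<nu> \<omega>) T
     \<and> (\<forall>K. totally_bounded K \<longrightarrow> (\<exists>S C. finite S \<and> (\<forall>f\<in>FV AP domT Tm \<nu> \<omega>. \<forall>x\<in>K.
           norm (T f x) \<le> C * (\<Sum>(j,m)\<in>S. FVsemi Tm \<nu> \<omega> j m f))))"

definition FV_precompact ::
  "('a \<Rightarrow> 'k::real_normed_field) set \<Rightarrow> ('m \<Rightarrow> ('a \<Rightarrow> 'k) set) \<Rightarrow> ('m \<Rightarrow> ('a \<Rightarrow> 'k) \<Rightarrow> 'w \<Rightarrow> 'k)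
   \<Rightarrow> ('j \<Rightarrow> 'm \<Rightarrow> 'w \<Rightarrow> real) \<Rightarrow> ('m \<Rightarrow> 'w set) \<Rightarrow> ('a \<Rightarrow> 'k) set \<Rightarrow> bool" where
  "FV_precompact AP domT Tm \<nu> \<omega> B \<longleftrightarrow> B \<subseteq> FV AP domT Tm \<nu> \<omega> \<and>
     (\<forall>S e. finite S \<longrightarrow> e > 0 \<longrightarrow> (\<exists>F. finite F \<and> F \<subseteq> FV AP domT Tm \<nu> \<omega> \<and>
        B \<subseteq> (\<Union>g\<in>F. {f. (\<Sum>(j,m)\<in>S. FVsemi Tm \<nu> \<omega> j m (f - g)) < e})))"

definition FV_dual_gamma_Cauchy ::
  "('a \<Rightarrow> 'k::real_normed_field) set \<Rightarrow> ('m \<Rightarrow> ('a \<Rightarrow> 'k) set) \<Rightarrow> ('m \<Rightarrow> ('a \<Rightarrow> 'k) \<Rightarrow> 'w \<Rightarrow> 'k)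
   \<Rightarrow> ('j \<Rightarrow> 'm \<Rightarrow> 'w \<Rightarrow> real) \<Rightarrow> ('m \<Rightarrow> 'w set) \<Rightarrow> (nat \<Rightarrow> ('a \<Rightarrow> 'k) \<Rightarrow> 'k) \<Rightarrow> bool" where
  "FV_dual_gamma_Cauchy AP domT Tm \<nu> \<omega> \<Phi> \<longleftrightarrow>
     (\<forall>B. FV_precompact AP domT Tm \<nu> \<omega> B \<longrightarrow>
        (\<forall>e>0. \<exists>N. \<forall>n\<ge>N. \<forall>k\<ge>N. \<forall>f\<in>B. norm (\<Phi> n f - \<Phi> k f) < e))"

end

theory Submission
  imports Defs
begin

(* Since T is continuous into CC(Omega), on every precompact K of Omega the values T f x,
   x in K, are bounded by one finite sum of seminorms of f.  For K = {x} this says that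
   delta_x o T is continuous.  For a Cauchy sequence (x_n) the range is precompact, so the
   functionals delta_{x_n} o T are equicontinuous; they are pointwise Cauchy because every
   T f is Cauchy continuous.  An equicontinuous, pointwise Cauchy sequence of functionals is
   uniformly Cauchy on precompact sets: approximate the set by a finite net and split
   into three epsilon/3 terms. *)

lemma totally_bounded_range_Cauchy:
  fixes X :: "nat \<Rightarrow> 'a::uniform_space"
  assumes "Cauchy X"
  shows "totally_bounded (range X)"
  unfolding totally_bounded_def
proof (intro allI impI)
  fix E :: "'a \<times> 'a \<Rightarrow> bool" assume E: "eventually E uniformity"
  then obtain N where N: "\<And>n m. n \<ge> N \<Longrightarrow> m \<ge> N \<Longrightarrow> E (X n, X m)"
    using assms unfolding Cauchy_uniform_iff by blast
  have "\<exists>x\<in>X ` {..N}. E (x, X n)" for n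
  proof (cases "n \<le> N")
    case True
    then show ?thesis using uniformity_refl[OF E] by auto
  next
    case False
    then show ?thesis using N[of N n] by auto
  qed
  then show "\<exists>F. finite F \<and> (\<forall>s\<in>range X. \<exists>x\<in>F. E (x, s))" by blast
qed

lemma Cauchy_uniform_on_finite:
  fixes u :: "'i \<Rightarrow> nat \<Rightarrow> 'b::metric_space"
  assumes "finite G" and "\<And>g. g \<in> G \<Longrightarrow> Cauchy (u g)" and "e > 0"
  obtains N where "\<And>g n k. g \<in> G \<Longrightarrow> n \<ge> N \<Longrightarrow> k \<ge> N \<Longrightarrow> dist (u g n) (u g k) < e"
proof -
  have "\<exists>N. \<forall>n\<ge>N. \<forall>k\<ge>N. dist (u g n) (u g k) < e" if "g \<in> G" for g
    using assms(2)[OF that] \<open>e > 0\<close> unfolding Cauchy_def by blast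
  then obtain M where M: "\<And>g n k. g \<in> G \<Longrightarrow> n \<ge> M g \<Longrightarrow> k \<ge> M g \<Longrightarrow> dist (u g n) (u g k) < e"
    by metis
  show ?thesis
  proof (rule that)
    fix g n k assume g: "g \<in> G" and "n \<ge> Max (M ` G)" "k \<ge> Max (M ` G)"
    moreover have "M g \<le> Max (M ` G)" using \<open>finite G\<close> g by simp
    ultimately show "dist (u g n) (u g k) < e" using M by (meson le_trans)
  qed
qed

lemma bdd_above_weighted_norm_add:
  fixes a b :: "'w \<Rightarrow> 'b::real_normed_vector"
  assumes "\<And>x. x \<in> A \<Longrightarrow> \<nu> x \<ge> 0"
    and "bdd_above ((\<lambda>x. norm (a x) * \<nu> x) ` A)" and "bdd_above ((\<lambda>x. norm (b x) * \<nu> x) ` A)"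
  shows "bdd_above ((\<lambda>x. norm (a x + b x) * \<nu> x) ` A)"
proof -
  obtain ca cb where ca: "\<And>x. x \<in> A \<Longrightarrow> norm (a x) * \<nu> x \<le> ca"
    and cb: "\<And>x. x \<in> A \<Longrightarrow> norm (b x) * \<nu> x \<le> cb"
    using assms(2,3) unfolding bdd_above_def by blast
  have "norm (a x + b x) * \<nu> x \<le> ca + cb" if "x \<in> A" for x
  proof -
    have "norm (a x + b x) * \<nu> x \<le> (norm (a x) + norm (b x)) * \<nu> x"
      by (rule mult_right_mono[OF norm_triangle_ineq assms(1)[OF that]])
    also have "\<dots> \<le> ca + cb" using ca[OF that] cb[OF that] by (simp add: distrib_right)
    finally show ?thesis .
  qed
  then show ?thesis by (rule bdd_aboveI2)
qed

lemma bdd_above_weighted_norm_mult: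
  fixes a :: "'w \<Rightarrow> 'k::real_normed_div_algebra"
  assumes "bdd_above ((\<lambda>x. norm (a x) * \<nu> x) ` A)"
  shows "bdd_above ((\<lambda>x. norm (c * a x) * \<nu> x) ` A)"
proof -
  obtain M where "\<And>x. x \<in> A \<Longrightarrow> norm (a x) * \<nu> x \<le> M"
    using assms unfolding bdd_above_def by blast
  then have "norm (c * a x) * \<nu> x \<le> norm c * M" if "x \<in> A" for x
    using mult_left_mono[OF _ norm_ge_zero, of _ M c] that by (simp add: norm_mult mult.assoc)
  then show ?thesis by (rule bdd_aboveI2)
qed

lemma K_linear_on_zero:
  assumes "K_subspace S" and "K_linear_on S T"
  shows "T (\<lambda>x. 0) = (\<lambda>y. 0)"
proof -
  have zero: "(\<lambda>x. 0) \<in> S" using assms(1) unfolding K_subspace_def by blast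
  have scale: "T (\<lambda>x. c * f x) = (\<lambda>y. c * T f y)" if "f \<in> S" for c f
    using assms(2) that unfolding K_linear_on_def by blast
  have "T (\<lambda>x. 0 * 0) = (\<lambda>y. 0 * T (\<lambda>x. 0) y)" by (rule scale[OF zero])
  then show ?thesis by simp
qed

lemma K_subspace_diff:
  assumes "K_subspace S" and "f \<in> S" and "g \<in> S"
  shows "f - g \<in> S"
proof -
  have "f - g = f + (\<lambda>x. (-1) * g x)" by (simp add: fun_eq_iff)
  then show ?thesis using assms unfolding K_subspace_def by metis
qed

lemma K_linear_functional_on_diff:
  assumes "K_subspace S" and "K_linear_functional_on S \<phi>" and "f \<in> S" and "g \<in> S"
  shows "\<phi> (f - g) = \<phi> f - \<phi> g"
proof -
  have neg: "(\<lambda>x. (-1) * g x) \<in> S" using assms(1,4) unfolding K_subspace_def by blast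
  have eq: "f - g = f + (\<lambda>x. (-1) * g x)" by (simp add: fun_eq_iff)
  have "\<phi> (f - g) = \<phi> f + \<phi> (\<lambda>x. (-1) * g x)"
    unfolding eq using assms(2,3) neg unfolding K_linear_functional_on_def by blast
  also have "\<phi> (\<lambda>x. (-1) * g x) = (-1) * \<phi> g"
    using assms(2,4) unfolding K_linear_functional_on_def by blast
  also have "\<phi> f + (-1) * \<phi> g = \<phi> f - \<phi> g" by simp
  finally show ?thesis .
qed

lemma K_linear_functional_on_eval:
  assumes "K_linear_on S T"
  shows "K_linear_functional_on S (\<lambda>f. T f x)"
  using assms unfolding K_linear_on_def K_linear_functional_on_def by simp

lemma K_subspace_FV:
  assumes "framework AP domT Tm \<nu> \<omega>"
  shows "K_subspace (FV AP domT Tm \<nu> \<omega>)"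
proof -
  have sub: "K_subspace AP" "\<And>m. K_subspace (domT m)"
    and lin: "\<And>m. K_linear_on (domT m) (Tm m)"
    and nonneg: "\<And>j m x. \<nu> j m x \<ge> 0"
    using assms unfolding framework_def by blast+
  have "(\<lambda>x. 0) \<in> FV AP domT Tm \<nu> \<omega>"
    using sub K_linear_on_zero[OF sub(2) lin] unfolding K_subspace_def FV_def
    by (auto simp: bdd_above_def)
  moreover have "f + g \<in> FV AP domT Tm \<nu> \<omega>"
    if "f \<in> FV AP domT Tm \<nu> \<omega>" "g \<in> FV AP domT Tm \<nu> \<omega>" for f g
  proof -
    have Tm_add: "Tm m (f + g) = (\<lambda>x. Tm m f x + Tm m g x)" for m
      using lin[of m] that unfolding K_linear_on_def FV_def by auto
    have "bdd_above ((\<lambda>x. norm (Tm m f x + Tm m g x) * \<nu> j m x) ` \<omega> m)" for j m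
      by (rule bdd_above_weighted_norm_add) (use nonneg that in \<open>auto simp: FV_def\<close>)
    then show ?thesis using that sub unfolding K_subspace_def FV_def by (simp add: Tm_add)
  qed
  moreover have "(\<lambda>x. c * f x) \<in> FV AP domT Tm \<nu> \<omega>" if "f \<in> FV AP domT Tm \<nu> \<omega>" for c f
  proof -
    have Tm_mult: "Tm m (\<lambda>x. c * f x) = (\<lambda>x. c * Tm m f x)" for m
      using lin[of m] that unfolding K_linear_on_def FV_def by auto
    have "bdd_above ((\<lambda>x. norm (c * Tm m f x) * \<nu> j m x) ` \<omega> m)" for j m
      by (rule bdd_above_weighted_norm_mult) (use that in \<open>auto simp: FV_def\<close>)
    then show ?thesis using that sub unfolding K_subspace_def FV_def by (simp add: Tm_mult)
  qed
  ultimately show ?thesis unfolding K_subspace_def by blast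
qed

lemma FVsemi_nonneg:
  assumes "framework AP domT Tm \<nu> \<omega>" and "f \<in> FV AP domT Tm \<nu> \<omega>"
  shows "FVsemi Tm \<nu> \<omega> j m f \<ge> 0"
proof -
  obtain x where x: "x \<in> \<omega> m" using assms(1) unfolding framework_def by blast
  have "0 \<le> norm (Tm m f x) * \<nu> j m x" using assms(1) unfolding framework_def by auto
  also have "\<dots> \<le> FVsemi Tm \<nu> \<omega> j m f" unfolding FVsemi_def
    by (rule cSUP_upper[OF x]) (use assms(2) in \<open>auto simp: FV_def\<close>)
  finally show ?thesis .
qed

lemma sum_FVsemi_nonneg:
  assumes "framework AP domT Tm \<nu> \<omega>" and "f \<in> FV AP domT Tm \<nu> \<omega>"
  shows "(\<Sum>(j,m)\<in>S. FVsemi Tm \<nu> \<omega> j m f) \<ge> 0"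
  using FVsemi_nonneg[OF assms] by (intro sum_nonneg) (auto split: prod.splits)

lemma FV_dual_gamma_Cauchy_if_equicontinuous:
  fixes \<Phi> :: "nat \<Rightarrow> ('a \<Rightarrow> 'k::real_normed_field) \<Rightarrow> 'k"
  assumes fw: "framework AP domT Tm \<nu> \<omega>"
    and lin: "\<And>n. K_linear_functional_on (FV AP domT Tm \<nu> \<omega>) (\<Phi> n)"
    and "finite S"
    and equicont: "\<And>n f. f \<in> FV AP domT Tm \<nu> \<omega> \<Longrightarrow>
          norm (\<Phi> n f) \<le> C * (\<Sum>(j,m)\<in>S. FVsemi Tm \<nu> \<omega> j m f)"
    and pointwise: "\<And>f. f \<in> FV AP domT Tm \<nu> \<omega> \<Longrightarrow> Cauchy (\<lambda>n. \<Phi> n f)"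
  shows "FV_dual_gamma_Cauchy AP domT Tm \<nu> \<omega> \<Phi>"
  unfolding FV_dual_gamma_Cauchy_def
proof (intro allI impI)
  let ?FV = "FV AP domT Tm \<nu> \<omega>"
  let ?p = "\<lambda>f. \<Sum>(j,m)\<in>S. FVsemi Tm \<nu> \<omega> j m f"
  fix B and e :: real
  assume B: "FV_precompact AP domT Tm \<nu> \<omega> B" and e: "e > 0"
  have C: "\<bar>C\<bar> + 1 > 0" by (simp add: add_nonneg_pos)
  define d where "d = e / (3 * (\<bar>C\<bar> + 1))"
  have d: "d > 0" using e C by (simp add: d_def)
  obtain F where F: "finite F" "F \<subseteq> ?FV" and net: "B \<subseteq> (\<Union>g\<in>F. {f. ?p (f - g) < d})"
    using B \<open>finite S\<close> d unfolding FV_precompact_def by blast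
  obtain N where N: "\<And>g n k. g \<in> F \<Longrightarrow> n \<ge> N \<Longrightarrow> k \<ge> N \<Longrightarrow> dist (\<Phi> n g) (\<Phi> k g) < e / 3"
    using Cauchy_uniform_on_finite[of F "\<lambda>g n. \<Phi> n g" "e / 3"] F pointwise e by auto
  have close: "norm (\<Phi> n f - \<Phi> n g) < e / 3" if "f \<in> ?FV" "g \<in> ?FV" "?p (f - g) < d" for f g n
  proof -
    have fg: "f - g \<in> ?FV" by (rule K_subspace_diff[OF K_subspace_FV[OF fw] that(1,2)])
    have "\<Phi> n f - \<Phi> n g = \<Phi> n (f - g)"
      using K_linear_functional_on_diff[OF K_subspace_FV[OF fw] lin that(1,2)] by simp
    also have "norm \<dots> \<le> C * ?p (f - g)" by (rule equicont[OF fg])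
    also have "\<dots> \<le> (\<bar>C\<bar> + 1) * ?p (f - g)"
      by (rule mult_right_mono[OF _ sum_FVsemi_nonneg[OF fw fg]]) simp
    also have "\<dots> < (\<bar>C\<bar> + 1) * d"
      by (rule mult_strict_left_mono[OF that(3) C])
    also have "\<dots> = e / 3" using C by (simp add: d_def field_simps)
    finally show ?thesis .
  qed
  show "\<exists>N. \<forall>n\<ge>N. \<forall>k\<ge>N. \<forall>f\<in>B. norm (\<Phi> n f - \<Phi> k f) < e"
  proof (intro exI[of _ N] allI impI ballI)
    fix n k f assume n: "n \<ge> N" and k: "k \<ge> N" and "f \<in> B"
    then obtain g where g: "g \<in> F" and fg: "?p (f - g) < d" using net by blast
    have f: "f \<in> ?FV" using \<open>f \<in> B\<close> B unfolding FV_precompact_def by blast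
    have g': "g \<in> ?FV" using g F by blast
    have "norm (\<Phi> n f - \<Phi> k f) < e / 3 + e / 3 + e / 3"
    proof (rule norm_diff_triangle_less[OF norm_diff_triangle_less])
      show "norm (\<Phi> n f - \<Phi> n g) < e / 3" by (rule close[OF f g' fg])
      show "norm (\<Phi> n g - \<Phi> k g) < e / 3" using N[OF g n k] by (simp add: dist_norm)
      show "norm (\<Phi> k g - \<Phi> k f) < e / 3" using close[OF f g' fg, of k] by (simp add: norm_minus_commute)
    qed
    then show "norm (\<Phi> n f - \<Phi> k f) < e" by simp
  qed
qed

theorem lemma4p5:
  fixes AP :: "('a::metric_space \<Rightarrow> 'k::{real_normed_field,banach}) set"
    and domT :: "'m \<Rightarrow> ('a \<Rightarrow> 'k) set"
    and Tm :: "'m \<Rightarrow> ('a \<Rightarrow> 'k) \<Rightarrow> 'w \<Rightarrow> 'k"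
    and \<nu> :: "'j \<Rightarrow> 'm \<Rightarrow> 'w \<Rightarrow> real"
    and \<omega> :: "'m \<Rightarrow> 'w set"
    and T :: "('a \<Rightarrow> 'k) \<Rightarrow> 'a \<Rightarrow> 'k"
  assumes "dom_space AP domT Tm \<nu> \<omega>"
    and "FV_to_CC_cont_linear AP domT Tm \<nu> \<omega> T"
  shows "(\<forall>x. FV_dual_elem AP domT Tm \<nu> \<omega> (\<lambda>f. T f x))
     \<and> (\<forall>X::nat \<Rightarrow> 'a. Cauchy X \<longrightarrow> FV_dual_gamma_Cauchy AP domT Tm \<nu> \<omega> (\<lambda>n f. T f (X n)))"
proof -
  let ?FV = "FV AP domT Tm \<nu> \<omega>"
  let ?p = "\<lambda>S f. \<Sum>(j,m)\<in>S. FVsemi Tm \<nu> \<omega> j m f"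
  have fw: "framework AP domT Tm \<nu> \<omega>" using assms(1) unfolding dom_space_def by blast
  have CC: "\<And>f. f \<in> ?FV \<Longrightarrow> T f \<in> CC" and lin: "K_linear_on ?FV T"
    and cont: "\<And>K. totally_bounded K \<Longrightarrow>
          \<exists>S C. finite S \<and> (\<forall>f\<in>?FV. \<forall>x\<in>K. norm (T f x) \<le> C * ?p S f)"
    using assms(2) unfolding FV_to_CC_cont_linear_def by blast+
  have "FV_dual_elem AP domT Tm \<nu> \<omega> (\<lambda>f. T f x)" for x
  proof -
    have "totally_bounded {x}"
      unfolding totally_bounded_metric by (intro allI impI exI[of _ "{x}"]) simp
    then obtain S C where "finite S" "\<forall>f\<in>?FV. \<forall>y\<in>{x}. norm (T f y) \<le> C * ?p S f"
      using cont by blast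
    then show ?thesis
      using K_linear_functional_on_eval[OF lin] unfolding FV_dual_elem_def by blast
  qed
  moreover have "FV_dual_gamma_Cauchy AP domT Tm \<nu> \<omega> (\<lambda>n f. T f (X n))" if X: "Cauchy X" for X
  proof -
    obtain S C where "finite S" and bound: "\<forall>f\<in>?FV. \<forall>y\<in>range X. norm (T f y) \<le> C * ?p S f"
      using cont[OF totally_bounded_range_Cauchy[OF X]] by blast
    show ?thesis
    proof (rule FV_dual_gamma_Cauchy_if_equicontinuous[OF fw K_linear_functional_on_eval[OF lin] \<open>finite S\<close>])
      show "\<And>n f. f \<in> ?FV \<Longrightarrow> norm (T f (X n)) \<le> C * ?p S f" using bound by blast
      show "\<And>f. f \<in> ?FV \<Longrightarrow> Cauchy (\<lambda>n. T f (X n))" using CC X unfolding CC_def by blast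
    qed
  qed
  ultimately show ?thesis by simp
qed

end
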